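(* Let $X\in\mathbb{R}^{m\times m}$, $Y\in\mathbb{R}^{n\times n}$, and define $L:\mathbb{R}^{m\times n}\to\mathbb{R}^{m\times n}$ by $L(A)=XAY$. Then $L$ maps every semipositive $m\times n$ matrix to a semipositive matrix if and only if either $X$ is row positive and $Y$ is inverse nonnegative, or $-X$ is row positive and $-Y$ is inverse nonnegative.
   Context: For a matrix or vector, $\geq 0$ means entrywise nonnegative and $>0$ entrywise positive. A matrix $A\in\mathbb{R}^{m\times n}$ is semipositive if there exists $x\in\mathbb{R}^n$ with $x\geq 0$ and $Ax>0$. A square matrix $X$ is row positive if $X\geq 0$ and every row of $X$ contains a nonzero entry. A square matrix $Y$ is inverse nonnegative if $Y$ is invertible and $Y^{-1}\geq 0$. *)

theory Defs
  imports "HOL-Analysis.Analysis"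
begin

definition nonneg_vec :: "real^'n \<Rightarrow> bool" where
  "nonneg_vec x \<longleftrightarrow> (\<forall>i. x $ i \<ge> 0)"

definition pos_vec :: "real^'n \<Rightarrow> bool" where
  "pos_vec x \<longleftrightarrow> (\<forall>i. x $ i > 0)"

definition nonneg_mat :: "real^'n^'m \<Rightarrow> bool" where
  "nonneg_mat A \<longleftrightarrow> (\<forall>i j. A $ i $ j \<ge> 0)"

definition semipositive :: "real^'n^'m \<Rightarrow> bool" where
  "semipositive A \<longleftrightarrow> (\<exists>x. nonneg_vec x \<and> pos_vec (A *v x))"

definition row_positive :: "real^'n^'n \<Rightarrow> bool" where
  "row_positive X \<longleftrightarrow> nonneg_mat X \<and> (\<forall>i. \<exists>j. X $ i $ j \<noteq> 0)"

definition inverse_nonnegative :: "real^'n^'n \<Rightarrow> bool" where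
  "inverse_nonnegative Y \<longleftrightarrow> invertible Y \<and> nonneg_mat (matrix_inv Y)"

end

theory Submission
  imports Defs
begin

text \<open>
  Sufficiency: if \<open>A x > 0\<close> with \<open>x \<ge> 0\<close>, then \<open>z = Y\<^sup>-\<^sup>1 x \<ge> 0\<close> and
  \<open>XAY z = X (A x) > 0\<close>, because a row positive matrix maps positive vectors to positive ones.

  Necessity: test \<open>L\<close> on rank-one matrices \<open>a b\<^sup>T\<close>, which it maps to \<open>(X a)(Y\<^sup>T b)\<^sup>T\<close>;
  such a matrix is semipositive iff all entries of \<open>a\<close> have the strict sign of \<open>b \<bullet> x\<close>
  for some \<open>x \<ge> 0\<close>. So \<open>X\<close> maps positive vectors to vectors without zero entries, which,
  after replacing \<open>X, Y\<close> by \<open>-X, -Y\<close> if necessary, forces \<open>X\<close> to be row positive.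
  Then \<open>Y\<^sup>T b\<close> has a positive entry whenever \<open>b\<close> has one, i.e. \<open>Y\<^sup>T w \<ge> 0\<close> implies
  \<open>w \<ge> 0\<close>, and such a monotone matrix is invertible with nonnegative inverse.
\<close>

lemma matrix_mul_neg_neg: "(- X) ** A ** (- Y) = X ** A ** (Y :: real^'n^'n)"
  by (simp add: vec_eq_iff matrix_matrix_mult_def sum_negf)

lemma matrix_inv_right:
  fixes A :: "real^'n^'n"
  assumes "invertible A"
  shows "A ** matrix_inv A = mat 1"
  using assms someI_ex[of "\<lambda>B. A ** B = mat 1 \<and> B ** A = mat 1"]
  by (auto simp: invertible_def matrix_inv_def)

lemma matrix_inv_left:
  fixes A :: "real^'n^'n"
  assumes "invertible A"
  shows "matrix_inv A ** A = mat 1"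
  using matrix_inv_right[OF assms] matrix_left_right_inverse by blast

lemma nonneg_mat_mult_nonneg_vec:
  "nonneg_mat M \<Longrightarrow> nonneg_vec x \<Longrightarrow> nonneg_vec (M *v x)"
  by (auto simp: nonneg_vec_def nonneg_mat_def matrix_vector_mult_def intro!: sum_nonneg)

lemma row_positive_mult_pos_vec:
  assumes X: "row_positive X" and y: "pos_vec y"
  shows "pos_vec (X *v y)"
  unfolding pos_vec_def
proof
  fix i
  obtain j where "X$i$j \<noteq> 0" using X by (auto simp: row_positive_def)
  moreover have X_nonneg: "\<And>l. X$i$l \<ge> 0" using X by (auto simp: row_positive_def nonneg_mat_def)
  moreover have y_pos: "\<And>l. y$l > 0" using y by (simp add: pos_vec_def)
  ultimately have "0 < X$i$j * y$j" by (simp add: order_less_le)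
  also have "\<dots> \<le> (\<Sum>l\<in>UNIV. X$i$l * y$l)"
    by (rule member_le_sum) (auto simp: X_nonneg y_pos less_imp_le)
  finally show "(X *v y)$i > 0" by (simp add: matrix_vector_mult_def)
qed

lemma semipositive_mult_mult:
  assumes X: "row_positive X" and Y: "inverse_nonnegative Y" and A: "semipositive A"
  shows "semipositive (X ** A ** Y)"
proof -
  obtain x where x: "nonneg_vec x" and Ax: "pos_vec (A *v x)"
    using A unfolding semipositive_def by blast
  have "nonneg_vec (matrix_inv Y *v x)"
    using Y x by (simp add: inverse_nonnegative_def nonneg_mat_mult_nonneg_vec)
  moreover have "(X ** A ** Y) *v (matrix_inv Y *v x) = X *v (A *v x)"
    using Y by (simp add: inverse_nonnegative_def matrix_vector_mul_assoc matrix_mul_assoc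
        flip: matrix_mul_assoc[of _ Y] add: matrix_inv_right)
  ultimately show ?thesis
    using row_positive_mult_pos_vec[OF X Ax] unfolding semipositive_def by metis
qed

definition outer_product :: "real^'m \<Rightarrow> real^'n \<Rightarrow> real^'n^'m" where
  "outer_product a b = (\<chi> i j. a$i * b$j)"

lemma outer_product_mult_vec: "outer_product a b *v x = (b \<bullet> x) *\<^sub>R a"
  by (simp add: vec_eq_iff outer_product_def matrix_vector_mult_def inner_vec_def
      sum_distrib_left mult_ac)

lemma mult_outer_product_mult: "X ** outer_product a b ** Y = outer_product (X *v a) (b v* Y)"
proof -
  have "(X ** outer_product a b ** Y) $ i $ k = outer_product (X *v a) (b v* Y) $ i $ k" for i k
    by (simp add: outer_product_def matrix_matrix_mult_def matrix_vector_mult_def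
        vector_matrix_mult_def sum_distrib_left sum_distrib_right mult.assoc mult.left_commute)
  then show ?thesis by (simp add: vec_eq_iff)
qed

lemma semipositive_outer_product_iff:
  "semipositive (outer_product a b) \<longleftrightarrow> (\<exists>x. nonneg_vec x \<and> (\<forall>i. (b \<bullet> x) * a$i > 0))"
  by (simp add: semipositive_def pos_vec_def outer_product_mult_vec)

lemma semipositive_outer_product:
  assumes "pos_vec a" and "b$k > 0"
  shows "semipositive (outer_product a b)"
  unfolding semipositive_outer_product_iff
  using assms by (intro exI[of _ "axis k 1"])
    (simp add: nonneg_vec_def pos_vec_def inner_axis, simp add: axis_def)

text \<open>If \<open>Z\<^sub>i\<^sub>j < 0\<close>, the positive vector \<open>-Z\<^sub>i\<^sub>j \<one> + (Z \<one>)\<^sub>i e\<^sub>j\<close>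
  is mapped to a vector with \<open>i\<close>-th entry \<open>0\<close>.\<close>

lemma row_positive_if_nonvanishing:
  fixes Z :: "real^'m^'m"
  assumes nonvanishing: "\<And>u i. pos_vec u \<Longrightarrow> (Z *v u)$i \<noteq> 0" and ones: "pos_vec (Z *v 1)"
  shows "row_positive Z"
proof -
  have "Z$i$j \<ge> 0" for i j
  proof (rule ccontr)
    assume neg: "\<not> Z$i$j \<ge> 0"
    define u :: "real^'m" where "u = (- Z$i$j) *\<^sub>R 1 + (Z *v 1)$i *\<^sub>R axis j 1"
    have "pos_vec u"
      using neg ones[unfolded pos_vec_def, rule_format, of i] by (auto simp: u_def pos_vec_def axis_def)
    moreover have "(Z *v u)$i = 0"
      by (simp add: u_def algebra_simps matrix_vector_mult_scaleR matrix_vector_mult_basis column_def)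
    ultimately show False using nonvanishing by blast
  qed
  moreover have "\<exists>j. Z$i$j \<noteq> 0" for i
  proof (rule ccontr)
    assume "\<nexists>j. Z$i$j \<noteq> 0"
    then have "(Z *v 1)$i = 0" by (simp add: matrix_vector_mult_def)
    with ones show False by (metis pos_vec_def less_irrefl)
  qed
  ultimately show ?thesis by (simp add: row_positive_def nonneg_mat_def)
qed

lemma inverse_nonnegative_if_monotone:
  fixes Y :: "real^'n^'n"
  assumes monotone: "\<And>w. nonneg_vec (w v* Y) \<Longrightarrow> nonneg_vec w"
  shows "inverse_nonnegative Y"
proof -
  have "w = 0" if "w v* Y = 0" for w
  proof -
    have "(- w) v* Y = 0"
      using that vector_matrix_mult_diff_distrib[of 0 w Y] by simp
    then have "nonneg_vec w" and "nonneg_vec (- w)"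
      using that monotone[of w] monotone[of "- w"] by (simp_all add: nonneg_vec_def)
    then show "w = 0" by (simp add: nonneg_vec_def vec_eq_iff order_antisym)
  qed
  then have "\<exists>B. Y ** B = mat 1"
    using matrix_left_invertible_ker[of "transpose Y"] left_invertible_transpose by auto
  then have invertible: "invertible Y" by (simp add: invertible_right_inverse)
  have "matrix_inv Y $ j $ i \<ge> 0" for i j
  proof -
    have "nonneg_vec (axis j 1 v* matrix_inv Y)"
      by (rule monotone)
        (simp add: vector_matrix_mul_assoc matrix_inv_left[OF invertible] nonneg_vec_def axis_def)
    then show ?thesis
      by (simp add: nonneg_vec_def flip: transpose_matrix_vector
          add: matrix_vector_mult_basis column_transpose row_def)
  qed
  with invertible show ?thesis by (simp add: inverse_nonnegative_def nonneg_mat_def)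
qed

lemma semipositivity_preserving_sign_definite:
  fixes X :: "real^'m^'m" and Y :: "real^'n^'n"
  assumes preserving: "\<forall>A :: real^'n^'m. semipositive A \<longrightarrow> semipositive (X ** A ** Y)"
    and u: "pos_vec u"
  shows "\<exists>s. \<forall>i. s * (X *v u)$i > 0"
proof -
  fix k :: 'n
  have "semipositive (outer_product u (axis k 1 :: real^'n))"
    using u by (rule semipositive_outer_product[where k = k]) simp
  then have "semipositive (outer_product (X *v u) (axis k 1 v* Y))"
    using preserving mult_outer_product_mult by metis
  then show ?thesis by (auto simp: semipositive_outer_product_iff)
qed

lemma semipositivity_preserving_monotone:
  fixes X :: "real^'m^'m" and Y :: "real^'n^'n"
  assumes preserving: "\<forall>A :: real^'n^'m. semipositive A \<longrightarrow> semipositive (X ** A ** Y)"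
    and ones: "pos_vec (X *v 1)" and wY: "nonneg_vec (w v* Y)"
  shows "nonneg_vec w"
proof (rule ccontr)
  assume "\<not> nonneg_vec w"
  then obtain k where "(- w)$k > 0" by (auto simp: nonneg_vec_def not_le)
  then have "semipositive (outer_product (1 :: real^'m) (- w))"
    by (intro semipositive_outer_product) (simp_all add: pos_vec_def)
  then have "semipositive (outer_product (X *v 1) (- w v* Y))"
    using preserving mult_outer_product_mult by metis
  then obtain x where x: "nonneg_vec x" and "\<forall>i. ((- w v* Y) \<bullet> x) * (X *v 1)$i > 0"
    unfolding semipositive_outer_product_iff by blast
  with ones have "(- w v* Y) \<bullet> x > 0"
    by (metis pos_vec_def zero_less_mult_pos2)
  moreover have "(w v* Y) \<bullet> x \<ge> 0"
    using wY x by (auto simp: inner_vec_def nonneg_vec_def intro: sum_nonneg)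
  moreover have "- w v* Y = - (w v* Y)"
    using vector_matrix_mult_diff_distrib[of 0 w Y] by simp
  ultimately show False by simp
qed

lemma semipositivity_preserving_row_positive_inverse_nonnegative:
  fixes X :: "real^'m^'m" and Y :: "real^'n^'n"
  assumes preserving: "\<forall>A :: real^'n^'m. semipositive A \<longrightarrow> semipositive (X ** A ** Y)"
    and ones: "pos_vec (X *v 1)"
  shows "row_positive X \<and> inverse_nonnegative Y"
proof
  show "row_positive X"
  proof (rule row_positive_if_nonvanishing[OF _ ones])
    fix u :: "real^'m" and i
    assume "pos_vec u"
    then obtain s where "\<forall>i. s * (X *v u)$i > 0"
      using semipositivity_preserving_sign_definite[OF preserving] by blast
    then show "(X *v u)$i \<noteq> 0" by (metis mult_zero_right less_irrefl)
  qed
  show "inverse_nonnegative Y"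
    using semipositivity_preserving_monotone[OF preserving ones]
    by (rule inverse_nonnegative_if_monotone)
qed

theorem mainTheorem8:
  fixes X :: "real^'m^'m" and Y :: "real^'n^'n"
  defines "L \<equiv> (\<lambda>A :: real^'n^'m. X ** A ** Y)"
  shows "(\<forall>A :: real^'n^'m. semipositive A \<longrightarrow> semipositive (L A)) \<longleftrightarrow>
         ((row_positive X \<and> inverse_nonnegative Y) \<or>
          (row_positive (- X) \<and> inverse_nonnegative (- Y)))"
proof
  assume "\<forall>A :: real^'n^'m. semipositive A \<longrightarrow> semipositive (L A)"
  then have preserving: "\<forall>A :: real^'n^'m. semipositive A \<longrightarrow> semipositive (X ** A ** Y)"
    and preserving_neg: "\<forall>A :: real^'n^'m. semipositive A \<longrightarrow> semipositive ((- X) ** A ** (- Y))"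
    by (simp_all add: L_def matrix_mul_neg_neg)
  obtain s where s: "\<forall>i. s * (X *v 1)$i > 0"
    using semipositivity_preserving_sign_definite[OF preserving, of 1] by (auto simp: pos_vec_def)
  show "(row_positive X \<and> inverse_nonnegative Y) \<or>
        (row_positive (- X) \<and> inverse_nonnegative (- Y))"
  proof (cases "s > 0")
    case True
    with s have "pos_vec (X *v 1)" by (auto simp: pos_vec_def zero_less_mult_iff)
    then show ?thesis
      using semipositivity_preserving_row_positive_inverse_nonnegative[OF preserving] by blast
  next
    case False
    with s have "pos_vec ((- X) *v 1)"
      by (auto simp: pos_vec_def zero_less_mult_iff matrix_vector_mult_def sum_negf)
    then show ?thesis
      using semipositivity_preserving_row_positive_inverse_nonnegative[OF preserving_neg] by blast
  qed
next
  assume "(row_positive X \<and> inverse_nonnegative Y) \<or>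
          (row_positive (- X) \<and> inverse_nonnegative (- Y))"
  then show "\<forall>A :: real^'n^'m. semipositive A \<longrightarrow> semipositive (L A)"
    unfolding L_def using semipositive_mult_mult matrix_mul_neg_neg by metis
qed

end
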